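(* Let $S$ be an intra-regular $\Gamma$-AG$^{**}$-groupoid and $A\subseteq S$ nonempty with $A\Gamma A\subseteq A$. Then $A$ is a $\Gamma$-interior ideal of $S$ if and only if $(S\Gamma A)\Gamma S=A$.
   Context: Let $S$ and $\Gamma$ be nonempty sets with a map $S\times\Gamma\times S\to S$, $(x,\gamma,y)\mapsto x\gamma y$. $S$ is a $\Gamma$-AG-groupoid if $(x\gamma y)\delta z=(z\gamma y)\delta x$ for all $x,y,z\in S$, $\gamma,\delta\in\Gamma$; it is a $\Gamma$-AG$^{**}$-groupoid if moreover $a\alpha(b\beta c)=b\alpha(a\beta c)$ for all $a,b,c\in S$, $\alpha,\beta\in\Gamma$. For subsets $A,B\subseteq S$, $A\Gamma B=\{a\gamma b: a\in A,\gamma\in\Gamma,b\in B\}$. $S$ is intra-regular if for every $a\in S$ there exist $x,y\in S$ and $\beta,\gamma,\delta\in\Gamma$ with $a=(x\beta(a\delta a))\gamma y$. A nonempty subset $A$ with $A\Gamma A\subseteq A$ is a $\Gamma$-interior ideal if $(S\Gamma A)\Gamma S\subseteq A$. *)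

theory Defs
  imports Main
begin

text \<open>A Gamma-groupoid: carrier type 's (S), parameter type 'g (Gamma), ternary
  operation op x g y = x g y. Both types are nonempty, as S and Gamma are.\<close>

definition Gamma_AG_groupoid :: "('s \<Rightarrow> 'g \<Rightarrow> 's \<Rightarrow> 's) \<Rightarrow> bool" where
  "Gamma_AG_groupoid op \<longleftrightarrow>
     (\<forall>x y z \<gamma> \<delta>. op (op x \<gamma> y) \<delta> z = op (op z \<gamma> y) \<delta> x)"

definition Gamma_AG2_groupoid :: "('s \<Rightarrow> 'g \<Rightarrow> 's \<Rightarrow> 's) \<Rightarrow> bool" where
  "Gamma_AG2_groupoid op \<longleftrightarrow> Gamma_AG_groupoid op \<and>
     (\<forall>a b c \<alpha> \<beta>. op a \<alpha> (op b \<beta> c) = op b \<alpha> (op a \<beta> c))"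

definition set_prod :: "('s \<Rightarrow> 'g \<Rightarrow> 's \<Rightarrow> 's) \<Rightarrow> 's set \<Rightarrow> 's set \<Rightarrow> 's set" where
  "set_prod op A B = {op a \<gamma> b | a \<gamma> b. a \<in> A \<and> b \<in> B}"

definition intra_regular :: "('s \<Rightarrow> 'g \<Rightarrow> 's \<Rightarrow> 's) \<Rightarrow> bool" where
  "intra_regular op \<longleftrightarrow>
     (\<forall>a. \<exists>x y \<beta> \<gamma> \<delta>. a = op (op x \<beta> (op a \<delta> a)) \<gamma> y)"

definition Gamma_interior_ideal :: "('s \<Rightarrow> 'g \<Rightarrow> 's \<Rightarrow> 's) \<Rightarrow> 's set \<Rightarrow> bool" where
  "Gamma_interior_ideal op A \<longleftrightarrow> A \<noteq> {} \<and> set_prod op A A \<subseteq> A \<and>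
     set_prod op (set_prod op UNIV A) UNIV \<subseteq> A"

end

theory Submission
  imports Defs
begin

(* An interior ideal A already satisfies (S\<Gamma>A)\<Gamma>S \<subseteq> A by definition, so the
   theorem amounts to the reverse inclusion A \<subseteq> (S\<Gamma>A)\<Gamma>S.  This comes from
   intra-regularity alone: every a is of the form (x\<beta>(a\<delta>a))\<gamma>y, and if A is
   closed under the product then a\<delta>a \<in> A, which places a in (S\<Gamma>A)\<Gamma>S. *)

lemma set_prodI:
  assumes "a \<in> A" and "b \<in> B"
  shows "op a \<gamma> b \<in> set_prod op A B"
  using assms unfolding set_prod_def by blast

lemma intra_regular_subset_interior_product:
  assumes intra: "intra_regular op"
    and closed: "set_prod op A A \<subseteq> A"
  shows "A \<subseteq> set_prod op (set_prod op UNIV A) UNIV"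
proof
  fix a assume a: "a \<in> A"
  obtain x y \<beta> \<gamma> \<delta> where a_eq: "a = op (op x \<beta> (op a \<delta> a)) \<gamma> y"
    using intra unfolding intra_regular_def by blast
  have "op a \<delta> a \<in> A"
    using closed set_prodI[OF a a, of op \<delta>] by (rule subsetD)
  then have "op x \<beta> (op a \<delta> a) \<in> set_prod op UNIV A"
    by (rule set_prodI[OF UNIV_I])
  then have "op (op x \<beta> (op a \<delta> a)) \<gamma> y \<in> set_prod op (set_prod op UNIV A) UNIV"
    by (rule set_prodI[OF _ UNIV_I])
  then show "a \<in> set_prod op (set_prod op UNIV A) UNIV"
    using a_eq by simp
qed

theorem mainTheorem7:
  fixes op :: "'s \<Rightarrow> 'g \<Rightarrow> 's \<Rightarrow> 's" and A :: "'s set"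
  assumes "Gamma_AG2_groupoid op"
    and "intra_regular op"
    and "A \<noteq> {}"
    and "set_prod op A A \<subseteq> A"
  shows "Gamma_interior_ideal op A \<longleftrightarrow> set_prod op (set_prod op UNIV A) UNIV = A"
proof -
  have "A \<subseteq> set_prod op (set_prod op UNIV A) UNIV"
    using intra_regular_subset_interior_product assms(2,4) .
  then show ?thesis
    using assms(3,4) unfolding Gamma_interior_ideal_def by blast
qed

end
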